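(* For every $\alpha\in(0,\pi]$, \[ P(S_\alpha)=\frac{1}{\sin\frac{\alpha}{2}}. \]
   Context: For $\alpha\in(0,2\pi)$ the angular domain is $S_\alpha=\{re^{it}: r>0,\ t\in(0,\alpha)\}\subset\mathbb{C}$; its boundary in $\overline{\mathbb{C}}=\mathbb{C}\cup\{\infty\}$ is the Jordan curve consisting of the two rays from $0$ together with the points $0$ and $\infty$. For four distinct points $a,b,c,d\in\overline{\mathbb{C}}$ set $p(a,b,c,d)=\frac{|a-b||c-d|+|a-d||b-c|}{|a-c||b-d|}$, where if one of the points is $\infty$ the expression is understood as the limit (all factors containing $\infty$ cancelled). For a domain $D\subset\overline{\mathbb{C}}$ whose boundary is a Jordan curve, $P(D)=\sup p(a,b,c,d)$ over all distinct $a,b,c,d\in\partial D$ occurring in this order when $\partial D$ is traversed in the positive direction. *)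

theory Defs
  imports "HOL-Analysis.Analysis" "HOL-Library.Extended_Real"
begin

text \<open>Points of the extended plane: \<open>Some z\<close> is the finite point z, \<open>None\<close> is \<infinity>.\<close>

definition cr_fin :: "complex \<Rightarrow> complex \<Rightarrow> complex \<Rightarrow> complex \<Rightarrow> real" where
  "cr_fin a b c d =
     (cmod (a - b) * cmod (c - d) + cmod (a - d) * cmod (b - c)) / (cmod (a - c) * cmod (b - d))"

text \<open>The quantity p(a,b,c,d); if one point is \<infinity>, all factors containing it are cancelled.\<close>
fun pq :: "complex option \<Rightarrow> complex option \<Rightarrow> complex option \<Rightarrow> complex option \<Rightarrow> real" where
  "pq (Some a) (Some b) (Some c) (Some d) = cr_fin a b c d"
| "pq None (Some b) (Some c) (Some d) = (cmod (c - d) + cmod (b - c)) / cmod (b - d)"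
| "pq (Some a) None (Some c) (Some d) = (cmod (c - d) + cmod (a - d)) / cmod (a - c)"
| "pq (Some a) (Some b) None (Some d) = (cmod (a - b) + cmod (a - d)) / cmod (b - d)"
| "pq (Some a) (Some b) (Some c) None = (cmod (a - b) + cmod (b - c)) / cmod (a - c)"
| "pq _ _ _ _ = 0"

text \<open>Parametrisation of the boundary of S_alpha by s in [0,2), traversed in the positive
  direction (domain on the left): s = 0 gives 0, s in (0,1) runs along the positive real
  axis from 0 to \<infinity>, s = 1 gives \<infinity>, s in (1,2) runs back along the ray of angle alpha
  from \<infinity> to 0. This map is a bijection of [0,2) onto the boundary.\<close>
definition sector_bdry :: "real \<Rightarrow> real \<Rightarrow> complex option" where
  "sector_bdry \<alpha> s =
     (if s < 1 then Some (complex_of_real (s / (1 - s)))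
      else if s = 1 then None
      else Some (complex_of_real ((2 - s) / (s - 1)) * cis \<alpha>))"

definition cyc_order :: "real \<Rightarrow> real \<Rightarrow> real \<Rightarrow> real \<Rightarrow> bool" where
  "cyc_order sa sb sc sd \<longleftrightarrow>
     (sa < sb \<and> sb < sc \<and> sc < sd) \<or> (sb < sc \<and> sc < sd \<and> sd < sa) \<or>
     (sc < sd \<and> sd < sa \<and> sa < sb) \<or> (sd < sa \<and> sa < sb \<and> sb < sc)"

definition P_sector :: "real \<Rightarrow> ereal" where
  "P_sector \<alpha> = Sup {ereal (pq (sector_bdry \<alpha> sa) (sector_bdry \<alpha> sb) (sector_bdry \<alpha> sc) (sector_bdry \<alpha> sd))
      | sa sb sc sd. sa \<in> {0..<2} \<and> sb \<in> {0..<2} \<and> sc \<in> {0..<2} \<and> sd \<in> {0..<2}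
                    \<and> cyc_order sa sb sc sd}"

end

theory Submission
  imports Defs
begin

text \<open>Unfold the boundary onto the real line, the positive ray going to \<open>t \<ge> 0\<close> and the ray of
  angle \<open>\<alpha>\<close> to \<open>t \<le> 0\<close>. Distances between points of the same ray are unchanged, distances
  across the two rays shrink by a factor between \<open>sin (\<alpha>/2)\<close> and \<open>1\<close>. On the line, four points in
  cyclic order have \<open>p = 1\<close> (equality in Ptolemy), so \<open>p \<le> 1 / sin (\<alpha>/2)\<close> as soon as at most one
  of the diagonals \<open>ac\<close>, \<open>bd\<close> crosses from one ray to the other; in particular whenever one of the
  points is \<infinity>. In the remaining configuration, two points on each ray, write
  \<open>p = (|X| + |Y|) / |X + Y|\<close> with \<open>X = (a - b)(c - d)\<close>, \<open>Y = (a - d)(b - c)\<close>; an AM-GM estimate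
  shows that the angle between \<open>X\<close> and \<open>Y\<close> is at most \<open>pi - \<alpha>\<close>, which gives the same bound.
  Equality holds for the points \<open>0, 1, \<infinity>, cis \<alpha>\<close>.\<close>

section \<open>Four-point inequalities in the plane\<close>

lemma ptolemy_identity:
  fixes a b c d :: "'a::comm_ring"
  shows "(a - b) * (c - d) + (a - d) * (b - c) = (a - c) * (b - d)"
  by (simp add: algebra_simps)

lemma two_min_le_add_mult:
  fixes a b c d :: real
  assumes "0 \<le> a" "0 \<le> b" "0 \<le> c" "0 \<le> d"
  shows "2 * min (a * b) (c * d) \<le> a * c + b * d"
proof -
  have "(2 * min (a * b) (c * d))\<^sup>2 = 4 * (min (a * b) (c * d) * min (a * b) (c * d))"
    by (simp add: power2_eq_square)
  also have "\<dots> \<le> 4 * ((a * b) * (c * d))"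
    using assms by (intro mult_left_mono mult_mono) auto
  also have "\<dots> = 4 * ((a * c) * (b * d))"
    by (simp add: ac_simps)
  also have "\<dots> \<le> (a * c + b * d)\<^sup>2"
    using zero_le_power2[of "a * c - b * d"] by (simp add: power2_eq_square algebra_simps)
  finally show ?thesis
    by (rule power2_le_imp_le) (use assms in simp)
qed

lemma divide_le_one_divide_of_le:
  fixes x y k s :: real
  assumes "0 < s" "0 < k" "x \<le> k" "s * k \<le> y"
  shows "x / y \<le> 1 / s"
proof -
  have "0 < y"
    using assms by (meson mult_pos_pos order_less_le_trans)
  have "x * s \<le> k * s"
    using assms by (intro mult_right_mono) auto
  then have "x * s \<le> y"
    using assms(4) by (metis mult.commute order_trans)
  then show ?thesis
    using \<open>0 < s\<close> \<open>0 < y\<close> by (simp add: divide_simps)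
qed

lemma sin_half_mul_add_norm_le_norm_diff:
  fixes x y :: complex
  assumes "Re (x * cnj y) \<le> cos \<alpha> * cmod x * cmod y"
  shows "sin (\<alpha> / 2) * (cmod x + cmod y) \<le> cmod (x - y)"
proof -
  define c where "c = cos \<alpha>"
  have sin_half: "(sin (\<alpha> / 2))\<^sup>2 = (1 - c) / 2"
    using cos_double_sin[of "\<alpha> / 2"] by (simp add: c_def)
  have "-1 \<le> c" by (simp add: c_def)
  have law_of_cosines: "(cmod (x - y))\<^sup>2 = (cmod x)\<^sup>2 + (cmod y)\<^sup>2 - 2 * Re (x * cnj y)"
    unfolding cmod_power2 by (simp add: power2_eq_square algebra_simps)
  have "(sin (\<alpha> / 2) * (cmod x + cmod y))\<^sup>2 = (1 - c) / 2 * (cmod x + cmod y)\<^sup>2"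
    using sin_half by (simp add: power_mult_distrib)
  also have "\<dots> \<le> (1 - c) / 2 * (cmod x + cmod y)\<^sup>2 + (1 + c) / 2 * (cmod x - cmod y)\<^sup>2"
    using \<open>-1 \<le> c\<close> by simp
  also have "\<dots> = (cmod x)\<^sup>2 + (cmod y)\<^sup>2 - 2 * c * cmod x * cmod y"
    by (simp add: power2_eq_square field_simps)
  also have "\<dots> \<le> (cmod (x - y))\<^sup>2"
    using assms law_of_cosines by (simp add: c_def)
  finally show ?thesis
    by (rule power2_le_imp_le) simp
qed

text \<open>Writing \<open>X = (a - b)(c - d)\<close> and \<open>Y = (a - d)(b - c)\<close>, Ptolemy's identity gives
  \<open>cr_fin a b c d = (|X| + |Y|) / |X + Y|\<close>, so it suffices that \<open>Y\<close> and \<open>-X\<close> enclose an angle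
  of at least \<open>\<alpha>\<close>.\<close>
lemma cr_fin_le_of_angle:
  assumes "0 < sin (\<alpha> / 2)"
    and "Re ((a - d) * (b - c) * cnj ((b - a) * (c - d)))
           \<le> cos \<alpha> * cmod ((a - d) * (b - c)) * cmod ((b - a) * (c - d))"
  shows "cr_fin a b c d \<le> 1 / sin (\<alpha> / 2)"
proof -
  define X where "X = (b - a) * (c - d)"
  define Y where "Y = (a - d) * (b - c)"
  have "Y - X = (a - c) * (b - d)"
    using ptolemy_identity[of a b c d] by (simp add: X_def Y_def algebra_simps)
  then have cr: "cr_fin a b c d = (cmod X + cmod Y) / cmod (Y - X)"
    by (simp add: cr_fin_def X_def Y_def norm_mult norm_minus_commute)
  have bound: "sin (\<alpha> / 2) * (cmod Y + cmod X) \<le> cmod (Y - X)"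
    using sin_half_mul_add_norm_le_norm_diff[OF assms(2)] by (simp add: X_def Y_def)
  show ?thesis
  proof (cases "cmod X + cmod Y = 0")
    case True
    then show ?thesis using cr assms(1) by simp
  next
    case False
    then have "0 < cmod X + cmod Y"
      using norm_ge_zero[of X] norm_ge_zero[of Y] by linarith
    then show ?thesis
      unfolding cr using assms(1) bound
      by (intro divide_le_one_divide_of_le[of _ "cmod X + cmod Y"]) (simp_all add: add.commute)
  qed
qed

lemma re_le_cos_mul_norm:
  fixes m p q \<alpha> :: real
  assumes "0 \<le> p" "0 \<le> q" "m + 2 * min p q \<le> 0"
  defines "z \<equiv> complex_of_real m + complex_of_real p * cis \<alpha> + complex_of_real q * cnj (cis \<alpha>)"
  shows "Re z \<le> cos \<alpha> * cmod z"
proof -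
  define c where "c = cos \<alpha>"
  have re: "Re z = m + (p + q) * c" and im: "Im z = (p - q) * sin \<alpha>"
    by (simp_all add: z_def c_def algebra_simps)
  have "m \<le> 0" using assms by simp
  show ?thesis
  proof (cases "c < 0")
    case True
    have "cmod z \<le> - m + p + q"
      using norm_triangle_ineq[of "complex_of_real m + complex_of_real p * cis \<alpha>"
          "complex_of_real q * cnj (cis \<alpha>)"] norm_triangle_ineq[of "complex_of_real m"
          "complex_of_real p * cis \<alpha>"] assms \<open>m \<le> 0\<close>
      by (simp add: z_def norm_mult)
    then have "c * (- m + p + q) \<le> c * cmod z"
      using True by (simp add: mult_left_mono_neg)
    moreover have "m * (1 + c) \<le> 0"
      using \<open>m \<le> 0\<close> cos_ge_minus_one[of \<alpha>] unfolding c_def by (smt (verit) mult_nonpos_nonneg)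
    ultimately show ?thesis
      using re by (simp add: c_def algebra_simps)
  next
    case False
    have "c \<le> 1" by (simp add: c_def)
    have "min p q = (p + q - \<bar>p - q\<bar>) / 2" by (simp add: min_def abs_if)
    then have "Re z \<le> c * \<bar>p - q\<bar> - (1 - c) * (p + q - \<bar>p - q\<bar>)"
      using re assms(3) by (simp add: algebra_simps)
    also have "\<dots> \<le> c * \<bar>p - q\<bar>"
      using \<open>c \<le> 1\<close> assms(1,2) by (simp add: abs_if)
    finally have re_le: "Re z \<le> c * \<bar>p - q\<bar>" .
    show ?thesis
    proof (cases "Re z \<le> 0")
      case True
      then show ?thesis using False by (smt (verit) c_def mult_nonneg_nonneg norm_ge_zero)
    next
      case pos: False
      have "(Re z)\<^sup>2 \<le> c\<^sup>2 * (p - q)\<^sup>2"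
        using re_le pos power_mono[of "Re z" "c * \<bar>p - q\<bar>" 2]
        by (simp add: power_mult_distrib)
      then have "(Re z)\<^sup>2 * (sin \<alpha>)\<^sup>2 \<le> c\<^sup>2 * (p - q)\<^sup>2 * (sin \<alpha>)\<^sup>2"
        by (rule mult_right_mono) simp
      also have "\<dots> = c\<^sup>2 * (Im z)\<^sup>2"
        using im by (simp add: power_mult_distrib)
      finally have "(Re z)\<^sup>2 * (sin \<alpha>)\<^sup>2 \<le> c\<^sup>2 * (Im z)\<^sup>2" .
      moreover have "(Re z)\<^sup>2 * ((sin \<alpha>)\<^sup>2 + c\<^sup>2) = (Re z)\<^sup>2"
        by (simp add: c_def)
      moreover have "(Re z)\<^sup>2 * ((sin \<alpha>)\<^sup>2 + c\<^sup>2) = (Re z)\<^sup>2 * (sin \<alpha>)\<^sup>2 + c\<^sup>2 * (Re z)\<^sup>2"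
        by (simp add: algebra_simps)
      moreover have "(c * cmod z)\<^sup>2 = c\<^sup>2 * (Im z)\<^sup>2 + c\<^sup>2 * (Re z)\<^sup>2"
        unfolding power_mult_distrib cmod_power2 by (simp add: algebra_simps)
      ultimately have "(Re z)\<^sup>2 \<le> (c * cmod z)\<^sup>2"
        by linarith
      then have "Re z \<le> c * cmod z"
        by (rule power2_le_imp_le) (use False in simp)
      then show ?thesis
        by (simp only: c_def)
    qed
  qed
qed

lemma pq_rotate: "pq a b c d = pq b c d a"
  by (cases a; cases b; cases c; cases d) (auto simp: cr_fin_def norm_minus_commute algebra_simps)

lemma cyc_order_rotate: "cyc_order a b c d \<longleftrightarrow> cyc_order b c d a"
  unfolding cyc_order_def by auto

lemma cyc_order_rotation_induct [consumes 1, case_names sorted rotate]: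
  assumes "cyc_order a b c d"
    and sorted: "\<And>a b c d. a < b \<Longrightarrow> b < c \<Longrightarrow> c < d \<Longrightarrow> P a b c d"
    and rotate: "\<And>a b c d. P b c d a \<Longrightarrow> P a b c d"
  shows "P a b c d"
  using assms(1) unfolding cyc_order_def
proof (elim disjE conjE)
  assume "a < b" "b < c" "c < d"
  then show ?thesis by (rule sorted)
next
  assume "b < c" "c < d" "d < a"
  then show ?thesis by (rule rotate[OF sorted])
next
  assume "c < d" "d < a" "a < b"
  then show ?thesis by (rule rotate[OF rotate[OF sorted]])
next
  assume "d < a" "a < b" "b < c"
  then show ?thesis by (rule rotate[OF rotate[OF rotate[OF sorted]]])
qed

section \<open>The unfolded boundary\<close>

definition sector_unfold :: "real \<Rightarrow> real \<Rightarrow> complex" where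
  "sector_unfold \<alpha> t = (if 0 \<le> t then complex_of_real t else complex_of_real (- t) * cis \<alpha>)"

lemma sector_unfold_nonpos: "t \<le> 0 \<Longrightarrow> sector_unfold \<alpha> t = complex_of_real (- t) * cis \<alpha>"
  by (auto simp: sector_unfold_def)

lemma norm_sector_unfold_diff_same_side:
  assumes "0 \<le> s * t"
  shows "cmod (sector_unfold \<alpha> s - sector_unfold \<alpha> t) = \<bar>s - t\<bar>"
proof -
  consider "0 \<le> s" "0 \<le> t" | "s \<le> 0" "t \<le> 0"
    using assms by (auto simp: zero_le_mult_iff)
  then show ?thesis
  proof cases
    case 1
    then show ?thesis
      using norm_of_real[of "s - t"] by (simp add: sector_unfold_def)
  next
    case 2
    have "complex_of_real (- s) * cis \<alpha> - complex_of_real (- t) * cis \<alpha>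
        = complex_of_real (t - s) * cis \<alpha>"
      by (simp add: algebra_simps)
    then show ?thesis
      using 2 norm_of_real[of "t - s"] by (simp add: sector_unfold_nonpos norm_mult abs_minus_commute)
  qed
qed

lemma norm_sector_unfold_diff_crossing:
  assumes "t \<le> 0" "0 \<le> s"
  shows "sin (\<alpha> / 2) * (s - t) \<le> cmod (sector_unfold \<alpha> s - sector_unfold \<alpha> t)"
    and "cmod (sector_unfold \<alpha> s - sector_unfold \<alpha> t) \<le> s - t"
proof -
  define x where "x = complex_of_real s"
  define y where "y = complex_of_real (- t) * cis \<alpha>"
  have diff: "sector_unfold \<alpha> s - sector_unfold \<alpha> t = x - y"
    using assms by (simp add: sector_unfold_def sector_unfold_nonpos x_def y_def)
  have norms: "cmod x = s" "cmod y = - t"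
    using assms by (simp_all add: x_def y_def norm_mult)
  have "Re (x * cnj y) = cos \<alpha> * cmod x * cmod y"
    using norms by (simp add: x_def y_def)
  then have "sin (\<alpha> / 2) * (cmod x + cmod y) \<le> cmod (x - y)"
    by (intro sin_half_mul_add_norm_le_norm_diff) simp
  then show "sin (\<alpha> / 2) * (s - t) \<le> cmod (sector_unfold \<alpha> s - sector_unfold \<alpha> t)"
    using diff norms by simp
  show "cmod (sector_unfold \<alpha> s - sector_unfold \<alpha> t) \<le> s - t"
    using diff norms norm_triangle_ineq4[of x y] by simp
qed

lemma norm_sector_unfold_diff_bounds:
  "sin (\<alpha> / 2) * \<bar>s - t\<bar> \<le> cmod (sector_unfold \<alpha> s - sector_unfold \<alpha> t)"
  "cmod (sector_unfold \<alpha> s - sector_unfold \<alpha> t) \<le> \<bar>s - t\<bar>"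
proof -
  have "sin (\<alpha> / 2) * \<bar>s - t\<bar> \<le> cmod (sector_unfold \<alpha> s - sector_unfold \<alpha> t)
      \<and> cmod (sector_unfold \<alpha> s - sector_unfold \<alpha> t) \<le> \<bar>s - t\<bar>"
  proof (cases "0 \<le> s * t")
    case True
    have "sin (\<alpha> / 2) * \<bar>s - t\<bar> \<le> \<bar>s - t\<bar>"
      using mult_right_mono[OF sin_le_one abs_ge_zero] by simp
    then show ?thesis
      using True by (simp add: norm_sector_unfold_diff_same_side)
  next
    case False
    then consider "t \<le> 0" "0 \<le> s" | "s \<le> 0" "0 \<le> t"
      by (auto simp: zero_le_mult_iff)
    then show ?thesis
    proof cases
      case 1
      then show ?thesis using norm_sector_unfold_diff_crossing[OF 1, of \<alpha>] by simp
    next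
      case 2
      then show ?thesis using norm_sector_unfold_diff_crossing[OF 2, of \<alpha>]
        by (simp add: norm_minus_commute abs_minus_commute)
    qed
  qed
  then show "sin (\<alpha> / 2) * \<bar>s - t\<bar> \<le> cmod (sector_unfold \<alpha> s - sector_unfold \<alpha> t)"
    "cmod (sector_unfold \<alpha> s - sector_unfold \<alpha> t) \<le> \<bar>s - t\<bar>"
    by auto
qed

lemma cr_fin_sector_unfold_le_same_side_diagonal:
  assumes "0 < sin (\<alpha> / 2)" "t1 < t2" "t2 < t3" "t3 < t4"
    and "0 \<le> t1 * t3 \<or> 0 \<le> t2 * t4"
  shows "cr_fin (sector_unfold \<alpha> t1) (sector_unfold \<alpha> t2) (sector_unfold \<alpha> t3) (sector_unfold \<alpha> t4)
           \<le> 1 / sin (\<alpha> / 2)"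
proof -
  let ?d = "\<lambda>x y. cmod (sector_unfold \<alpha> x - sector_unfold \<alpha> y)"
  note upper = norm_sector_unfold_diff_bounds(2)[of \<alpha>]
  note lower = norm_sector_unfold_diff_bounds(1)[of \<alpha>]
  have "?d t1 t2 * ?d t3 t4 \<le> (t2 - t1) * (t4 - t3)"
    using upper[of t1 t2] upper[of t3 t4] assms(2-4) by (intro mult_mono) auto
  moreover have "?d t1 t4 * ?d t2 t3 \<le> (t4 - t1) * (t3 - t2)"
    using upper[of t1 t4] upper[of t2 t3] assms(2-4) by (intro mult_mono) auto
  moreover have "(t2 - t1) * (t4 - t3) + (t4 - t1) * (t3 - t2) = (t3 - t1) * (t4 - t2)"
    by (simp add: algebra_simps)
  ultimately have num: "?d t1 t2 * ?d t3 t4 + ?d t1 t4 * ?d t2 t3 \<le> (t3 - t1) * (t4 - t2)"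
    by linarith
  have den: "sin (\<alpha> / 2) * ((t3 - t1) * (t4 - t2)) \<le> ?d t1 t3 * ?d t2 t4"
    using assms(5)
  proof
    assume "0 \<le> t1 * t3"
    then have "?d t1 t3 = t3 - t1"
      using assms(2,3) by (simp add: norm_sector_unfold_diff_same_side)
    moreover have "sin (\<alpha> / 2) * (t4 - t2) \<le> ?d t2 t4"
      using lower[of t2 t4] assms(2-4) by simp
    ultimately show ?thesis
      using assms(2,3) by (simp add: mult_left_mono mult.left_commute)
  next
    assume "0 \<le> t2 * t4"
    then have "?d t2 t4 = t4 - t2"
      using assms(3,4) by (simp add: norm_sector_unfold_diff_same_side)
    moreover have "sin (\<alpha> / 2) * (t3 - t1) \<le> ?d t1 t3"
      using lower[of t1 t3] assms(2-4) by simp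
    ultimately show ?thesis
      using assms(3,4) by (simp add: mult_right_mono mult.assoc)
  qed
  show ?thesis
    unfolding cr_fin_def using assms(1-4) num den
    by (intro divide_le_one_divide_of_le[of _ "(t3 - t1) * (t4 - t2)"]) simp_all
qed

lemma cr_fin_sector_unfold_le_crossing:
  assumes "0 < sin (\<alpha> / 2)" "t1 < t2" "t2 < 0" "0 < t3" "t3 < t4"
  shows "cr_fin (sector_unfold \<alpha> t1) (sector_unfold \<alpha> t2) (sector_unfold \<alpha> t3) (sector_unfold \<alpha> t4)
           \<le> 1 / sin (\<alpha> / 2)"
proof -
  define w where "w = cis \<alpha>"
  define a where "a = sector_unfold \<alpha> t1"
  define b where "b = sector_unfold \<alpha> t2"
  define c where "c = sector_unfold \<alpha> t3"
  define d where "d = sector_unfold \<alpha> t4"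
  define A where "A = (t2 - t1) * (t4 - t3)"
  define z where "z = complex_of_real (t1 * t3 + t2 * t4) + complex_of_real (t1 * t2) * w
                      + complex_of_real (t3 * t4) * cnj w"
  have pts: "a = complex_of_real (- t1) * w" "b = complex_of_real (- t2) * w"
    "c = complex_of_real t3" "d = complex_of_real t4"
    using assms by (simp_all add: a_def b_def c_def d_def w_def sector_unfold_def)
  have "w * cnj w = 1"
    by (simp add: w_def cis_cnj cis_mult)
  have X: "(b - a) * (c - d) = complex_of_real A * w"
    unfolding pts A_def by (simp add: algebra_simps)
  have "(a - d) * (b - c) * cnj w
      = (complex_of_real (t1 * t2) * w + complex_of_real (t1 * t3 + t2 * t4)) * (w * cnj w)
        + complex_of_real (t3 * t4) * cnj w"
    unfolding pts by (simp add: algebra_simps)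
  then have Y: "(a - d) * (b - c) * cnj w = z"
    using \<open>w * cnj w = 1\<close> by (simp add: z_def)
  have "0 \<le> A" using assms by (simp add: A_def)
  \<comment> \<open>AM-GM keeps \<open>z\<close> out of the cone of half-angle \<open>\<alpha>\<close> around the positive real axis.\<close>
  have "2 * min ((- t1) * (- t2)) (t3 * t4) \<le> (- t1) * t3 + (- t2) * t4"
    using assms by (intro two_min_le_add_mult) auto
  then have "Re z \<le> cos \<alpha> * cmod z"
    unfolding z_def w_def using assms by (intro re_le_cos_mul_norm) (auto simp: zero_le_mult_iff)
  moreover have "cmod z = cmod ((a - d) * (b - c))"
    unfolding Y[symmetric] by (simp add: norm_mult w_def)
  ultimately have "A * Re z \<le> A * (cos \<alpha> * cmod ((a - d) * (b - c)))"
    using \<open>0 \<le> A\<close> by (simp add: mult_left_mono)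
  also have "\<dots> = cos \<alpha> * cmod ((a - d) * (b - c)) * cmod ((b - a) * (c - d))"
    using \<open>0 \<le> A\<close> by (simp add: X norm_mult w_def)
  finally have "A * Re z \<le> cos \<alpha> * cmod ((a - d) * (b - c)) * cmod ((b - a) * (c - d))" .
  moreover have "Re ((a - d) * (b - c) * cnj ((b - a) * (c - d))) = A * Re z"
    unfolding X Y[symmetric] by (simp add: algebra_simps)
  ultimately have "Re ((a - d) * (b - c) * cnj ((b - a) * (c - d)))
      \<le> cos \<alpha> * cmod ((a - d) * (b - c)) * cmod ((b - a) * (c - d))"
    by simp
  from cr_fin_le_of_angle[OF assms(1) this] show ?thesis
    by (simp only: a_def b_def c_def d_def)
qed

lemma pq_sector_unfold_le:
  assumes "0 < sin (\<alpha> / 2)" "cyc_order t1 t2 t3 t4"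
  shows "pq (Some (sector_unfold \<alpha> t1)) (Some (sector_unfold \<alpha> t2))
            (Some (sector_unfold \<alpha> t3)) (Some (sector_unfold \<alpha> t4)) \<le> 1 / sin (\<alpha> / 2)"
  using assms(2)
proof (induction rule: cyc_order_rotation_induct)
  case (sorted t1 t2 t3 t4)
  have "0 \<le> t1 * t3" if "t3 \<le> 0"
    using that sorted by (intro mult_nonpos_nonpos) auto
  moreover have "0 \<le> t2 * t4" if "0 \<le> t2"
    using that sorted by (intro mult_nonneg_nonneg) auto
  ultimately consider "t2 < 0" "0 < t3" | "0 \<le> t1 * t3 \<or> 0 \<le> t2 * t4"
    by fastforce
  then show ?case
    using sorted cr_fin_sector_unfold_le_crossing[OF assms(1)]
      cr_fin_sector_unfold_le_same_side_diagonal[OF assms(1)]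
    by cases simp_all
next
  case (rotate t1 t2 t3 t4)
  then show ?case by (simp only: pq_rotate[of "Some (sector_unfold \<alpha> t1)"])
qed

lemma pq_sector_unfold_infinity_le:
  assumes "0 < sin (\<alpha> / 2)" "t1 < t2" "t2 < t3"
  shows "pq (Some (sector_unfold \<alpha> t1)) (Some (sector_unfold \<alpha> t2)) (Some (sector_unfold \<alpha> t3)) None
           \<le> 1 / sin (\<alpha> / 2)"
proof -
  let ?d = "\<lambda>x y. cmod (sector_unfold \<alpha> x - sector_unfold \<alpha> y)"
  note bounds = norm_sector_unfold_diff_bounds[of \<alpha>]
  have "0 < t3 - t1"
    using assms by simp
  moreover have "?d t1 t2 + ?d t2 t3 \<le> t3 - t1"
    using bounds(2)[of t1 t2] bounds(2)[of t2 t3] assms by simp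
  moreover have "sin (\<alpha> / 2) * (t3 - t1) \<le> ?d t1 t3"
    using bounds(1)[of t1 t3] assms by simp
  ultimately show ?thesis
    using divide_le_one_divide_of_le[OF assms(1)] by (simp del: diff_gt_0_iff_gt)
qed

section \<open>The parametrised boundary\<close>

definition sector_coord :: "real \<Rightarrow> real" where
  "sector_coord s = (if s < 1 then s / (1 - s) else (s - 2) / (s - 1))"

lemma sector_bdry_eq_unfold:
  assumes "0 \<le> s" "s < 2" "s \<noteq> 1"
  shows "sector_bdry \<alpha> s = Some (sector_unfold \<alpha> (sector_coord s))"
  using assms by (auto simp: sector_bdry_def sector_unfold_def sector_coord_def divide_simps algebra_simps)

lemma sector_coord_nonneg: "0 \<le> s \<Longrightarrow> s < 1 \<Longrightarrow> 0 \<le> sector_coord s"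
  by (simp add: sector_coord_def)

lemma sector_coord_neg: "1 < s \<Longrightarrow> s < 2 \<Longrightarrow> sector_coord s < 0"
  by (simp add: sector_coord_def divide_neg_pos)

lemma sector_coord_less:
  assumes "s < s'" "0 \<le> s \<and> s' < 1 \<or> 1 < s \<and> s' < 2"
  shows "sector_coord s < sector_coord s'"
  using assms mult_strict_left_mono[of s s' "s - 1"]
  by (auto simp: sector_coord_def divide_simps algebra_simps)

text \<open>The parameter circle \<open>[0, 2)\<close> is cut at \<open>1\<close> (the point \<infinity>) and its two arcs are swapped,
  which preserves the cyclic order.\<close>
lemma cyc_order_sector_coord:
  assumes "cyc_order sa sb sc sd" and "\<forall>s \<in> {sa, sb, sc, sd}. 0 \<le> s \<and> s < 2 \<and> s \<noteq> 1"
  shows "cyc_order (sector_coord sa) (sector_coord sb) (sector_coord sc) (sector_coord sd)"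
  using assms
proof (induction rule: cyc_order_rotation_induct)
  case (sorted a b c d)
  have "\<And>x y. x \<in> {a, b, c, d} \<Longrightarrow> y \<in> {a, b, c, d} \<Longrightarrow> x < y \<Longrightarrow> (x < 1 \<longleftrightarrow> y < 1)
      \<Longrightarrow> sector_coord x < sector_coord y"
    using sorted.prems by (intro sector_coord_less) auto
  moreover have "\<And>x. x \<in> {a, b, c, d} \<Longrightarrow> x < 1 \<Longrightarrow> 0 \<le> sector_coord x"
    using sorted.prems by (auto intro: sector_coord_nonneg)
  moreover have "\<And>x. x \<in> {a, b, c, d} \<Longrightarrow> 1 < x \<Longrightarrow> sector_coord x < 0"
    using sorted.prems by (auto intro: sector_coord_neg)
  ultimately show ?case
    using sorted unfolding cyc_order_def by (smt (verit) insert_iff)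
next
  case (rotate a b c d)
  then show ?case
    using cyc_order_rotate[of "sector_coord a"] by (simp add: insert_commute)
qed

lemma sector_coord_less_of_cyc_order_infinity:
  assumes "cyc_order sa sb sc 1" and "\<forall>s \<in> {sa, sb, sc}. 0 \<le> s \<and> s < 2"
  shows "sector_coord sa < sector_coord sb" "sector_coord sb < sector_coord sc"
proof -
  have "\<And>x y. x \<in> {sa, sb, sc} \<Longrightarrow> y \<in> {sa, sb, sc} \<Longrightarrow> x < y \<Longrightarrow> (x < 1 \<longleftrightarrow> y < 1)
      \<Longrightarrow> sector_coord x < sector_coord y"
    using assms(1) assms(2) unfolding cyc_order_def by (intro sector_coord_less) auto
  moreover have "\<And>x. x \<in> {sa, sb, sc} \<Longrightarrow> x < 1 \<Longrightarrow> 0 \<le> sector_coord x"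
    using assms(2) by (auto intro: sector_coord_nonneg)
  moreover have "\<And>x. x \<in> {sa, sb, sc} \<Longrightarrow> 1 < x \<Longrightarrow> sector_coord x < 0"
    using assms(2) by (auto intro: sector_coord_neg)
  ultimately show "sector_coord sa < sector_coord sb" "sector_coord sb < sector_coord sc"
    using assms(1) unfolding cyc_order_def by (smt (verit) insert_iff)+
qed

lemma pq_sector_bdry_infinity_le:
  assumes "0 < sin (\<alpha> / 2)" "cyc_order sa sb sc 1" "\<forall>s \<in> {sa, sb, sc}. 0 \<le> s \<and> s < 2"
  shows "pq (sector_bdry \<alpha> sa) (sector_bdry \<alpha> sb) (sector_bdry \<alpha> sc) (sector_bdry \<alpha> 1)
           \<le> 1 / sin (\<alpha> / 2)"
proof -
  have "sa \<noteq> 1" "sb \<noteq> 1" "sc \<noteq> 1"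
    using assms(2) by (auto simp: cyc_order_def)
  then have bdry: "sector_bdry \<alpha> sa = Some (sector_unfold \<alpha> (sector_coord sa))"
    "sector_bdry \<alpha> sb = Some (sector_unfold \<alpha> (sector_coord sb))"
    "sector_bdry \<alpha> sc = Some (sector_unfold \<alpha> (sector_coord sc))"
    using assms(3) by (simp_all add: sector_bdry_eq_unfold)
  have "sector_bdry \<alpha> 1 = None"
    by (simp add: sector_bdry_def)
  then show ?thesis
    unfolding bdry \<open>sector_bdry \<alpha> 1 = None\<close>
    by (intro pq_sector_unfold_infinity_le assms(1) sector_coord_less_of_cyc_order_infinity[OF assms(2,3)])
qed

lemma pq_sector_bdry_le:
  assumes "0 < sin (\<alpha> / 2)" "cyc_order sa sb sc sd"
    and "sa \<in> {0..<2}" "sb \<in> {0..<2}" "sc \<in> {0..<2}" "sd \<in> {0..<2}"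
  shows "pq (sector_bdry \<alpha> sa) (sector_bdry \<alpha> sb) (sector_bdry \<alpha> sc) (sector_bdry \<alpha> sd)
           \<le> 1 / sin (\<alpha> / 2)"
proof -
  note infinity = pq_sector_bdry_infinity_le[OF assms(1)]
  consider "1 \<notin> {sa, sb, sc, sd}" | "sa = 1" | "sb = 1" | "sc = 1" | "sd = 1"
    by auto
  then show ?thesis
  proof cases
    case 1
    then have "\<forall>s \<in> {sa, sb, sc, sd}. 0 \<le> s \<and> s < 2 \<and> s \<noteq> 1"
      using assms(3-6) by auto
    then show ?thesis
      using pq_sector_unfold_le[OF assms(1) cyc_order_sector_coord[OF assms(2)]]
      by (simp add: sector_bdry_eq_unfold del: pq.simps)
  next
    case 2
    then have "cyc_order sb sc sd 1"
      using assms(2) cyc_order_rotate[of 1] by simp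
    then show ?thesis
      using 2 assms(4-6) infinity[of sb sc sd] pq_rotate[of "sector_bdry \<alpha> sa"] by simp
  next
    case 3
    then have "cyc_order sc sd sa 1"
      using assms(2) cyc_order_rotate[of sa] cyc_order_rotate[of 1] by simp
    then show ?thesis
      using 3 assms(3,5,6) infinity[of sc sd sa] pq_rotate[of "sector_bdry \<alpha> sa"]
        pq_rotate[of "sector_bdry \<alpha> sb"] by simp
  next
    case 4
    then have "cyc_order sd sa sb 1"
      using assms(2) cyc_order_rotate[of sd] by simp
    then show ?thesis
      using 4 assms(3,4,6) infinity[of sd sa sb] pq_rotate[of "sector_bdry \<alpha> sd"] by simp
  next
    case 5
    then show ?thesis
      using assms infinity[of sa sb sc] by simp
  qed
qed

lemma norm_one_minus_cis:
  assumes "0 \<le> sin (\<alpha> / 2)"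
  shows "cmod (1 - cis \<alpha>) = 2 * sin (\<alpha> / 2)"
proof (rule power2_eq_imp_eq)
  have "(cmod (1 - cis \<alpha>))\<^sup>2 = (1 - cos \<alpha>)\<^sup>2 + (sin \<alpha>)\<^sup>2"
    by (simp add: cmod_power2)
  also have "\<dots> = 1 - 2 * cos \<alpha> + ((sin \<alpha>)\<^sup>2 + (cos \<alpha>)\<^sup>2)"
    by (simp add: power2_eq_square algebra_simps)
  also have "\<dots> = 2 - 2 * cos \<alpha>"
    by simp
  also have "\<dots> = (2 * sin (\<alpha> / 2))\<^sup>2"
    using cos_double_sin[of "\<alpha> / 2"] by (simp add: power_mult_distrib)
  finally show "(cmod (1 - cis \<alpha>))\<^sup>2 = (2 * sin (\<alpha> / 2))\<^sup>2" .
qed (use assms in simp_all)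

lemma pq_sector_bdry_extremal:
  assumes "0 < sin (\<alpha> / 2)"
  shows "pq (sector_bdry \<alpha> 0) (sector_bdry \<alpha> (1/2)) (sector_bdry \<alpha> 1) (sector_bdry \<alpha> (3/2))
           = 1 / sin (\<alpha> / 2)"
  using assms norm_one_minus_cis[of \<alpha>] by (simp add: sector_bdry_def)

theorem theorem3p6:
  fixes \<alpha> :: real
  assumes "0 < \<alpha>" and "\<alpha> \<le> pi"
  shows "P_sector \<alpha> = ereal (1 / sin (\<alpha> / 2))"
proof -
  have sin_pos: "0 < sin (\<alpha> / 2)"
    using assms by (intro sin_gt_zero) auto
  have "cyc_order 0 (1/2) 1 (3/2)"
    by (simp add: cyc_order_def)
  show ?thesis
    unfolding P_sector_def
  proof (rule cSup_eq_maximum, goal_cases)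
    case 1
    show ?case
      using pq_sector_bdry_extremal[OF sin_pos] \<open>cyc_order 0 (1/2) 1 (3/2)\<close>
      by (intro CollectI exI[of _ 0] exI[of _ "1/2"] exI[of _ 1] exI[of _ "3/2"]) simp
  next
    case (2 x)
    then show ?case
      using pq_sector_bdry_le[OF sin_pos] by auto
  qed
qed

end
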